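(* Let $C$ be a linear completely regular $[n,k,2]_q$ code with covering radius $\rho=1$ and $k<n-1$, let $n_a$ be the number of codewords at distance one from any vector not in $C$, and let $X_1,\dots,X_{n/n_a}$ be a partition of $\{1,\dots,n\}$ into sets of size $n_a$ such that every weight-2 codeword of $C$ has support contained in one of the $X_j$. Let ${\bf x}=(x_1,\dots,x_n)\in C$ and let $X_j$ be one of these sets with $\mathrm{supp}({\bf x})\cap X_j\neq\emptyset$. Then there exists a codeword ${\bf x}'\in C$ which coincides with ${\bf x}$ in all positions outside $X_j$ and satisfies $|\mathrm{supp}({\bf x}')\cap X_j|\le 1$; moreover, in the case where such an ${\bf x}'$ has $|\mathrm{supp}({\bf x}')\cap X_j|=1$, for every position $i\in X_j$ there is such a codeword ${\bf x}'$ with $\mathrm{supp}({\bf x}')\cap X_j=\{i\}$.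
   Context: Hamming distance; $\mathrm{supp}({\bf v})$ is the set of nonzero coordinates of ${\bf v}$; covering radius $\rho=\max_{\bf v}\min_{{\bf x}\in C}d({\bf v},{\bf x})$. $C$ is completely regular if for every vector ${\bf x}$, with $t=d({\bf x},C)$, the number of codewords at distance $i$ from ${\bf x}$ depends only on $t$ and $i$. *)

theory Defs
  imports Main
begin

text \<open>q-ary vectors of length n over a finite field 'a, coordinates indexed by 1..n,
  represented as functions nat => 'a vanishing outside {1..n}.\<close>

definition vecs :: "nat \<Rightarrow> (nat \<Rightarrow> 'a::zero) set" where
  "vecs n = {v. \<forall>i. i \<notin> {1..n} \<longrightarrow> v i = 0}"

definition hdist :: "nat \<Rightarrow> (nat \<Rightarrow> 'a) \<Rightarrow> (nat \<Rightarrow> 'a) \<Rightarrow> nat" where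
  "hdist n x y = card {i \<in> {1..n}. x i \<noteq> y i}"

definition supp :: "nat \<Rightarrow> (nat \<Rightarrow> 'a::zero) \<Rightarrow> nat set" where
  "supp n v = {i \<in> {1..n}. v i \<noteq> 0}"

definition wt :: "nat \<Rightarrow> (nat \<Rightarrow> 'a::zero) \<Rightarrow> nat" where
  "wt n v = card (supp n v)"

definition linear_code :: "nat \<Rightarrow> (nat \<Rightarrow> 'a::field) set \<Rightarrow> bool" where
  "linear_code n C \<longleftrightarrow> C \<subseteq> vecs n \<and> (\<lambda>_. 0) \<in> C \<and>
     (\<forall>x\<in>C. \<forall>y\<in>C. (\<lambda>i. x i + y i) \<in> C) \<and>
     (\<forall>a. \<forall>x\<in>C. (\<lambda>i. a * x i) \<in> C)"

definition min_dist_eq :: "nat \<Rightarrow> (nat \<Rightarrow> 'a) set \<Rightarrow> nat \<Rightarrow> bool" where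
  "min_dist_eq n C d \<longleftrightarrow> (\<exists>x\<in>C. \<exists>y\<in>C. x \<noteq> y \<and> hdist n x y = d) \<and>
     (\<forall>x\<in>C. \<forall>y\<in>C. x \<noteq> y \<longrightarrow> d \<le> hdist n x y)"

text \<open>An [n,k,d]_q linear code (q = card of the field type 'a).\<close>
definition lin_code_nkd :: "nat \<Rightarrow> nat \<Rightarrow> nat \<Rightarrow> (nat \<Rightarrow> 'a::{field,finite}) set \<Rightarrow> bool" where
  "lin_code_nkd n k d C \<longleftrightarrow> linear_code n C \<and> card C = card (UNIV :: 'a set) ^ k \<and> min_dist_eq n C d"

definition dist_code :: "nat \<Rightarrow> (nat \<Rightarrow> 'a) \<Rightarrow> (nat \<Rightarrow> 'a) set \<Rightarrow> nat" where
  "dist_code n v C = Min {hdist n v x | x. x \<in> C}"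

definition covering_radius :: "nat \<Rightarrow> (nat \<Rightarrow> 'a::zero) set \<Rightarrow> nat" where
  "covering_radius n C = Max {dist_code n v C | v. v \<in> vecs n}"

definition completely_regular :: "nat \<Rightarrow> (nat \<Rightarrow> 'a::zero) set \<Rightarrow> bool" where
  "completely_regular n C \<longleftrightarrow>
     (\<forall>x\<in>vecs n. \<forall>y\<in>vecs n. dist_code n x C = dist_code n y C \<longrightarrow>
        (\<forall>i. card {c\<in>C. hdist n x c = i} = card {c\<in>C. hdist n y c = i}))"

end

theory Submission
  imports Defs
begin

text \<open>
  Let \<open>i \<noteq> l\<close> lie in a block \<open>X\<close>. Besides \<open>0\<close>,
  the \<open>n\<^sub>a\<close> codewords at distance one from the unit vector \<open>e\<^sub>i\<close> are weight-2 codewords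
  \<open>c\<close> with \<open>c\<^sub>i = 1\<close> and support \<open>{i, j}\<close>, where \<open>j \<in> X\<close> by the hypothesis on weight-2
  codewords; distinct such codewords have distinct \<open>j\<close>, and \<open>|X - {i}| = n\<^sub>a - 1\<close>, so every
  \<open>l \<in> X - {i}\<close> occurs. Subtracting suitable multiples of these codewords from \<open>x\<close> clears
  all coordinates of \<open>X\<close> except \<open>i\<close>. If the result vanished on \<open>X\<close>, a codeword \<open>x'\<close> with
  a single nonzero coordinate \<open>p\<close> in \<open>X\<close> would agree with it outside \<open>p\<close>, hence equal it.
\<close>

definition unit_vec :: "nat \<Rightarrow> nat \<Rightarrow> 'a::zero_neq_one" where
  "unit_vec i = (\<lambda>m. if m = i then 1 else 0)"

lemma hdist_le_1_if_agree_off: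
  assumes "\<forall>m. m \<noteq> j \<longrightarrow> x m = y m"
  shows "hdist n x y \<le> 1"
proof -
  have "{m \<in> {1..n}. x m \<noteq> y m} \<subseteq> {j}" using assms by blast
  then have "card {m \<in> {1..n}. x m \<noteq> y m} \<le> card {j}" by (intro card_mono) simp_all
  then show ?thesis unfolding hdist_def by simp
qed

lemma unit_vec_in_vecs: "i \<in> {1..n} \<Longrightarrow> unit_vec i \<in> vecs n"
  unfolding vecs_def unit_vec_def by auto

lemma hdist_unit_vec_zero: "i \<in> {1..n} \<Longrightarrow> hdist n (unit_vec i) (\<lambda>_. 0) = 1"
proof -
  assume "i \<in> {1..n}"
  then have "{m \<in> {1..n}. unit_vec i m \<noteq> (0::'a)} = {i}" by (auto simp: unit_vec_def)
  then show ?thesis unfolding hdist_def by simp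
qed

locale min_dist_2_code =
  fixes n :: nat and C :: "(nat \<Rightarrow> 'a::field) set"
  assumes linear: "linear_code n C"
    and min_dist: "\<forall>x\<in>C. \<forall>y\<in>C. x \<noteq> y \<longrightarrow> 2 \<le> hdist n x y"
begin

lemma zero_mem: "(\<lambda>_. 0) \<in> C"
  using linear unfolding linear_code_def by blast

lemma add_mem: "u \<in> C \<Longrightarrow> v \<in> C \<Longrightarrow> (\<lambda>m. u m + v m) \<in> C"
  using linear unfolding linear_code_def by blast

lemma scale_mem: "u \<in> C \<Longrightarrow> (\<lambda>m. a * u m) \<in> C"
  using linear unfolding linear_code_def by blast

lemma vanishes_outside: "c \<in> C \<Longrightarrow> m \<notin> {1..n} \<Longrightarrow> c m = 0"
  using linear unfolding linear_code_def vecs_def by blast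

lemma zero_if_notin_supp: "c \<in> C \<Longrightarrow> m \<notin> supp n c \<Longrightarrow> c m = 0"
  using vanishes_outside unfolding supp_def by blast

lemma lincomb_mem:
  assumes "finite S" "\<forall>l\<in>S. c l \<in> C"
  shows "(\<lambda>m. \<Sum>l\<in>S. a l * c l m) \<in> C"
  using assms
proof (induction S rule: finite_induct)
  case empty
  then show ?case using zero_mem by simp
next
  case (insert l S)
  then show ?case using add_mem[OF scale_mem] by (simp add: sum.insert)
qed

lemma eq_if_agree_off:
  assumes "c \<in> C" "c' \<in> C" "\<forall>m. m \<noteq> j \<longrightarrow> c m = c' m"
  shows "c = c'"
  using min_dist assms(1,2) hdist_le_1_if_agree_off[OF assms(3), of n] by fastforce

lemma unit_vec_notin: "unit_vec i \<notin> C"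
proof
  assume "unit_vec i \<in> C"
  then have "unit_vec i = (\<lambda>_. 0 :: 'a)"
    using eq_if_agree_off[OF _ zero_mem, of _ i] by (simp add: unit_vec_def)
  then show False
    unfolding unit_vec_def by (metis one_neq_zero)
qed

lemma unit_vec_neighbour:
  assumes "i \<in> {1..n}" "c \<in> C" "c \<noteq> (\<lambda>_. 0)" "hdist n (unit_vec i) c = 1"
  obtains j where "j \<noteq> i" "c i = 1" "supp n c = {i, j}"
proof -
  obtain j where j: "{m \<in> {1..n}. unit_vec i m \<noteq> c m} = {j}"
    using assms(4) unfolding hdist_def by (rule card_1_singletonE)
  have off_j: "c m = unit_vec i m" if "m \<noteq> j" for m
    using j that assms(1) vanishes_outside[OF assms(2)] by (cases "m \<in> {1..n}") (auto simp: unit_vec_def)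
  have "j \<noteq> i"
  proof
    assume "j = i"
    then have "\<forall>m. m \<noteq> j \<longrightarrow> c m = 0" using off_j by (simp add: unit_vec_def)
    then show False using assms(3) eq_if_agree_off[OF assms(2) zero_mem] by blast
  qed
  have "c i = 1" using off_j \<open>j \<noteq> i\<close> by (simp add: unit_vec_def)
  have "j \<in> {m \<in> {1..n}. unit_vec i m \<noteq> c m}" using j by simp
  then have "j \<in> {1..n}" "c j \<noteq> 0" using \<open>j \<noteq> i\<close> by (auto simp: unit_vec_def)
  have "supp n c = {i, j}"
  proof (intro equalityI subsetI)
    show "m \<in> {i, j}" if "m \<in> supp n c" for m
      using that off_j[of m] unfolding supp_def unit_vec_def by (auto split: if_splits)
    show "m \<in> supp n c" if "m \<in> {i, j}" for m
      using that assms(1) \<open>j \<in> {1..n}\<close> \<open>c j \<noteq> 0\<close> \<open>c i = 1\<close> unfolding supp_def by auto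
  qed
  with \<open>j \<noteq> i\<close> \<open>c i = 1\<close> show ?thesis using that by blast
qed

end

locale block_partitioned_code = min_dist_2_code n C
  for n :: nat and C :: "(nat \<Rightarrow> 'a::field) set" +
  fixes na :: nat and P :: "nat set set"
  assumes neighbour_count: "\<forall>v\<in>vecs n - C. card {c\<in>C. hdist n v c = 1} = na"
    and part_union: "\<Union>P = {1..n}"
    and part_disj: "\<forall>X\<in>P. \<forall>Y\<in>P. X \<noteq> Y \<longrightarrow> X \<inter> Y = {}"
    and part_card: "\<forall>X\<in>P. card X = na"
    and weight_2_in_block: "\<forall>c\<in>C. wt n c = 2 \<longrightarrow> (\<exists>X\<in>P. supp n c \<subseteq> X)"
begin

lemma block_subset: "X \<in> P \<Longrightarrow> X \<subseteq> {1..n}"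
  using part_union by blast

lemma finite_block: "X \<in> P \<Longrightarrow> finite X"
  using block_subset finite_subset by blast

lemma unit_vec_neighbour_in_block:
  assumes "X \<in> P" "i \<in> X" "c \<in> C" "c \<noteq> (\<lambda>_. 0)" "hdist n (unit_vec i) c = 1"
  obtains j where "j \<in> X - {i}" "c i = 1" "supp n c = {i, j}"
proof -
  have "i \<in> {1..n}" using assms(1,2) block_subset by blast
  then obtain j where j: "j \<noteq> i" "c i = 1" "supp n c = {i, j}"
    using unit_vec_neighbour assms(3-5) by blast
  then have "wt n c = 2" unfolding wt_def by simp
  then obtain Y where "Y \<in> P" "supp n c \<subseteq> Y"
    using weight_2_in_block assms(3) by blast
  moreover from this have "Y = X" using part_disj assms(1,2) j(3) by blast
  ultimately show ?thesis using that j by blast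
qed

lemma card_nonzero_unit_vec_neighbours:
  assumes X: "X \<in> P" and i: "i \<in> X"
  shows "card ({c\<in>C. hdist n (unit_vec i) c = 1} - {\<lambda>_. 0}) = card (X - {i})"
proof -
  define B where "B = {c\<in>C. hdist n (unit_vec i) c = 1}"
  have iN: "i \<in> {1..n}" using X i block_subset by blast
  then have "unit_vec i \<in> vecs n - C" using unit_vec_in_vecs unit_vec_notin by blast
  then have "card B = na" using neighbour_count unfolding B_def by blast
  then have card_B: "card B = card X" using part_card X by simp
  have "(\<lambda>_. 0) \<in> B" using hdist_unit_vec_zero[OF iN] zero_mem unfolding B_def by simp
  then have "card (B - {\<lambda>_. 0}) = card B - 1" by (rule card_Diff_singleton)
  then show ?thesis using card_B card_Diff_singleton[OF i] unfolding B_def by simp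
qed

lemma block_pair_codeword:
  assumes X: "X \<in> P" and i: "i \<in> X" and l: "l \<in> X - {i}"
  shows "\<exists>c\<in>C. c i = 1 \<and> supp n c = {i, l}"
proof -
  define A where "A = {c\<in>C. hdist n (unit_vec i) c = 1} - {\<lambda>_. 0}"
  define partner where "partner c = the_elem (supp n c - {i})" for c :: "nat \<Rightarrow> 'a"
  have AC: "A \<subseteq> C" unfolding A_def by blast
  have partner: "partner c \<in> X - {i} \<and> c i = 1 \<and> supp n c = {i, partner c}" if "c \<in> A" for c
  proof -
    have "c \<in> C" "c \<noteq> (\<lambda>_. 0)" "hdist n (unit_vec i) c = 1"
      using that unfolding A_def by auto
    then obtain j where j: "j \<in> X - {i}" "c i = 1" "supp n c = {i, j}"
      by (rule unit_vec_neighbour_in_block[OF X i])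
    then have "supp n c - {i} = {j}" by auto
    then have "partner c = j" unfolding partner_def by simp
    then show ?thesis using j by simp
  qed
  have inj: "inj_on partner A"
  proof
    fix c c' assume c: "c \<in> A" and c': "c' \<in> A" and same: "partner c = partner c'"
    have "c m = c' m" if "m \<noteq> partner c" for m
    proof (cases "m = i")
      case False
      then have "m \<notin> supp n c" "m \<notin> supp n c'" using that same partner[OF c] partner[OF c'] by auto
      then show ?thesis using c c' AC zero_if_notin_supp by (metis subsetD)
    qed (use partner[OF c] partner[OF c'] in simp)
    then show "c = c'" using eq_if_agree_off c c' AC by blast
  qed
  have "partner ` A \<subseteq> X - {i}" using partner by blast
  then have "partner ` A = X - {i}"
    using finite_block[OF X] card_image[OF inj] card_nonzero_unit_vec_neighbours[OF X i]
    unfolding A_def by (intro card_subset_eq) simp_all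
  then have "l \<in> partner ` A" using l by simp
  then obtain c where c: "c \<in> A" "l = partner c" by (rule imageE)
  then have "c \<in> C" "c i = 1" "supp n c = {i, l}" using AC partner[OF c(1)] by auto
  then show ?thesis by blast
qed

lemma exists_clear_block:
  assumes X: "X \<in> P" and i: "i \<in> X" and x: "x \<in> C"
  shows "\<exists>y\<in>C. (\<forall>m. m \<notin> X \<longrightarrow> y m = x m) \<and> supp n y \<inter> X \<subseteq> {i}"
proof -
  have "\<forall>l\<in>X - {i}. \<exists>c\<in>C. c l = 1 \<and> supp n c = {l, i}"
    using block_pair_codeword[OF X] i by blast
  then obtain c where c: "\<And>l. l \<in> X - {i} \<Longrightarrow> c l \<in> C \<and> c l l = 1 \<and> supp n (c l) = {l, i}"
    using bchoice[of "X - {i}"] by (metis (no_types, lifting))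
  have c_zero: "c l m = 0" if "l \<in> X - {i}" "m \<noteq> l" "m \<noteq> i" for l m
    using c[OF that(1)] that(2,3) zero_if_notin_supp by blast
  define y where "y = (\<lambda>m. x m + (\<Sum>l\<in>X - {i}. (- x l) * c l m))"
  have "y \<in> C"
    unfolding y_def using x c finite_block[OF X] by (intro add_mem lincomb_mem) auto
  moreover have "y m = x m" if "m \<notin> X" for m
  proof -
    have "c l m = 0" if "l \<in> X - {i}" for l
      using that \<open>m \<notin> X\<close> i by (intro c_zero) auto
    then have "(\<Sum>l\<in>X - {i}. (- x l) * c l m) = 0" by simp
    then show ?thesis unfolding y_def by simp
  qed
  moreover have "y m = 0" if m: "m \<in> X - {i}" for m
  proof -
    have "(\<Sum>l\<in>X - {i}. (- x l) * c l m) = (- x m) * c m m + (\<Sum>l\<in>X - {i} - {m}. (- x l) * c l m)"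
      using m finite_block[OF X] by (simp add: sum.remove)
    also have "\<dots> = - x m" using c[OF m] c_zero m by simp
    finally show ?thesis unfolding y_def by simp
  qed
  ultimately show ?thesis unfolding supp_def by blast
qed

lemma exists_block_point_codeword:
  assumes X: "X \<in> P" and i: "i \<in> X" and x: "x \<in> C"
    and z: "z \<in> C" "\<forall>m. m \<notin> X \<longrightarrow> z m = x m" "supp n z \<inter> X = {p}"
  shows "\<exists>y\<in>C. (\<forall>m. m \<notin> X \<longrightarrow> y m = x m) \<and> supp n y \<inter> X = {i}"
proof -
  obtain y where y: "y \<in> C" "\<forall>m. m \<notin> X \<longrightarrow> y m = x m" "supp n y \<inter> X \<subseteq> {i}"
    using exists_clear_block[OF X i x] by blast
  have "supp n y \<inter> X \<noteq> {}"
  proof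
    assume y_empty: "supp n y \<inter> X = {}"
    have "y m = z m" if "m \<noteq> p" for m
    proof (cases "m \<in> X")
      case True
      then have "m \<notin> supp n y" "m \<notin> supp n z" using y_empty z(3) that by auto
      then show ?thesis using zero_if_notin_supp[OF y(1)] zero_if_notin_supp[OF z(1)] by simp
    next
      case False
      then show ?thesis using y(2) z(2) by simp
    qed
    then have "y = z" using eq_if_agree_off y(1) z(1) by blast
    then show False using y_empty z(3) by simp
  qed
  then have "supp n y \<inter> X = {i}" using y(3) by blast
  then show ?thesis using y(1,2) by blast
qed

end

theorem lemma3p8:
  fixes C :: "(nat \<Rightarrow> 'a::{field,finite}) set"
    and n k na :: nat
    and P :: "nat set set"
    and x :: "nat \<Rightarrow> 'a"
    and Xj :: "nat set"
  assumes code: "lin_code_nkd n k 2 C"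
    and cr: "completely_regular n C"
    and rho: "covering_radius n C = 1"
    and kn: "k < n - 1"
    and na: "\<forall>v\<in>vecs n - C. card {c\<in>C. hdist n v c = 1} = na"
    and part_union: "\<Union>P = {1..n}"
    and part_disj: "\<forall>X\<in>P. \<forall>Y\<in>P. X \<noteq> Y \<longrightarrow> X \<inter> Y = {}"
    and part_card: "\<forall>X\<in>P. card X = na"
    and wt2: "\<forall>c\<in>C. wt n c = 2 \<longrightarrow> (\<exists>X\<in>P. supp n c \<subseteq> X)"
    and xC: "x \<in> C"
    and XjP: "Xj \<in> P"
    and meet: "supp n x \<inter> Xj \<noteq> {}"
  shows "(\<exists>x'\<in>C. (\<forall>i. i \<notin> Xj \<longrightarrow> x' i = x i) \<and> card (supp n x' \<inter> Xj) \<le> 1) \<and>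
         ((\<exists>x'\<in>C. (\<forall>i. i \<notin> Xj \<longrightarrow> x' i = x i) \<and> card (supp n x' \<inter> Xj) = 1) \<longrightarrow>
          (\<forall>i\<in>Xj. \<exists>x'\<in>C. (\<forall>l. l \<notin> Xj \<longrightarrow> x' l = x l) \<and> supp n x' \<inter> Xj = {i}))"
proof -
  \<comment> \<open>Complete regularity, \<open>\<rho> = 1\<close> and \<open>k < n - 1\<close> are what guarantee \<open>n\<^sub>a\<close> and the partition
     in the paper; here both are hypotheses.\<close>
  interpret block_partitioned_code n C na P
    using code na part_union part_disj part_card wt2
    by unfold_locales (auto simp: lin_code_nkd_def min_dist_eq_def)
  obtain i where "i \<in> Xj" using meet by blast
  then obtain y where "y \<in> C" "\<forall>m. m \<notin> Xj \<longrightarrow> y m = x m" "supp n y \<inter> Xj \<subseteq> {i}"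
    using exists_clear_block XjP xC by blast
  moreover have "card (supp n y \<inter> Xj) \<le> 1"
    using card_mono[OF _ \<open>supp n y \<inter> Xj \<subseteq> {i}\<close>] by simp
  ultimately have clear: "\<exists>x'\<in>C. (\<forall>i. i \<notin> Xj \<longrightarrow> x' i = x i) \<and> card (supp n x' \<inter> Xj) \<le> 1"
    by blast
  show ?thesis
  proof (intro conjI impI ballI clear)
    fix i assume "i \<in> Xj" and "\<exists>x'\<in>C. (\<forall>i. i \<notin> Xj \<longrightarrow> x' i = x i) \<and> card (supp n x' \<inter> Xj) = 1"
    then obtain z p where "z \<in> C" "\<forall>m. m \<notin> Xj \<longrightarrow> z m = x m" "supp n z \<inter> Xj = {p}"
      by (metis card_1_singletonE)
    then show "\<exists>x'\<in>C. (\<forall>l. l \<notin> Xj \<longrightarrow> x' l = x l) \<and> supp n x' \<inter> Xj = {i}"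
      using exists_block_point_codeword XjP \<open>i \<in> Xj\<close> xC by blast
  qed
qed

end
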